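(* Let $V$ be a left vector space over a field $K$ (not necessarily commutative, of arbitrary finite or infinite dimension) such that $\mathcal G\neq\emptyset$. For all $P,Q\in\mathcal G$ the following are equivalent: (a) $P$ and $Q$ are adjacent. (b) There exists $R\in\mathcal G$ with $R\neq P$, $R\neq Q$, such that for every $X\in\mathcal G$: if $X\oplus R=V$ then $X\oplus P=V$ or $X\oplus Q=V$.
   Context: Throughout, $K$ is a (not necessarily commutative) field, i.e. a division ring, and $V$ is a left vector space over $K$ of arbitrary (possibly infinite) dimension. $\mathcal G$ denotes the set of all subspaces $X\le V$ such that $X$ is isomorphic to the quotient space $V/X$ (equivalently, $X$ is isomorphic to one, hence all, of its complements in $V$). Two elements $X,Y\in\mathcal G$ are called distant if they are complementary, i.e. $X\oplus Y=V$ ($X\cap Y=0$ and $X+Y=V$). Two elements $X,Y\in\mathcal G$ are called adjacent (written $X\sim Y$) if $\dim((X+Y)/X)=\dim((X+Y)/Y)=1$. *)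

theory Defs
  imports Main
begin

text \<open>A left vector space over a (not necessarily commutative) field, i.e. a division ring K
  (type class division_ring), is modelled as an abelian group type 'v together with a left
  scalar multiplication sc satisfying the module axioms. The whole type 'v is the space V.\<close>

definition left_vs :: "('k::division_ring \<Rightarrow> 'v::ab_group_add \<Rightarrow> 'v) \<Rightarrow> bool" where
  "left_vs sc \<longleftrightarrow>
     (\<forall>a u v. sc a (u + v) = sc a u + sc a v) \<and>
     (\<forall>a b v. sc (a + b) v = sc a v + sc b v) \<and>
     (\<forall>a b v. sc (a * b) v = sc a (sc b v)) \<and>
     (\<forall>v. sc 1 v = v)"

definition subspace :: "('k::division_ring \<Rightarrow> 'v::ab_group_add \<Rightarrow> 'v) \<Rightarrow> 'v set \<Rightarrow> bool" where
  "subspace sc X \<longleftrightarrow> 0 \<in> X \<and> (\<forall>x\<in>X. \<forall>y\<in>X. x + y \<in> X) \<and> (\<forall>a. \<forall>x\<in>X. sc a x \<in> X)"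

definition ssum :: "'v::ab_group_add set \<Rightarrow> 'v set \<Rightarrow> 'v set" where
  "ssum X Y = {x + y | x y. x \<in> X \<and> y \<in> Y}"

text \<open>The quotient space V/X: its elements are the cosets v + X, with the induced operations.\<close>
definition coset :: "'v::ab_group_add set \<Rightarrow> 'v \<Rightarrow> 'v set" where
  "coset X v = {v + x | x. x \<in> X}"

definition quot :: "'v::ab_group_add set \<Rightarrow> 'v set set" where
  "quot X = range (coset X)"

definition qadd :: "'v::ab_group_add set \<Rightarrow> 'v set \<Rightarrow> 'v set \<Rightarrow> 'v set" where
  "qadd X A B = {a + b | a b. a \<in> A \<and> b \<in> B}"

definition qscale :: "('k::division_ring \<Rightarrow> 'v::ab_group_add \<Rightarrow> 'v) \<Rightarrow> 'v set \<Rightarrow> 'k \<Rightarrow> 'v set \<Rightarrow> 'v set" where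
  "qscale sc X c A = {sc c a + x | a x. a \<in> A \<and> x \<in> X}"

definition lin_iso :: "'a set \<Rightarrow> ('a \<Rightarrow> 'a \<Rightarrow> 'a) \<Rightarrow> ('k \<Rightarrow> 'a \<Rightarrow> 'a)
                      \<Rightarrow> 'b set \<Rightarrow> ('b \<Rightarrow> 'b \<Rightarrow> 'b) \<Rightarrow> ('k \<Rightarrow> 'b \<Rightarrow> 'b) \<Rightarrow> ('a \<Rightarrow> 'b) \<Rightarrow> bool" where
  "lin_iso A addA scA B addB scB f \<longleftrightarrow>
     bij_betw f A B \<and>
     (\<forall>x\<in>A. \<forall>y\<in>A. f (addA x y) = addB (f x) (f y)) \<and>
     (\<forall>c. \<forall>x\<in>A. f (scA c x) = scB c (f x))"

definition Gr :: "('k::division_ring \<Rightarrow> 'v::ab_group_add \<Rightarrow> 'v) \<Rightarrow> 'v set set" where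
  "Gr sc = {X. subspace sc X \<and>
              (\<exists>f. lin_iso X (+) sc (quot X) (qadd X) (qscale sc X) f)}"

text \<open>X and Y are complementary: X \<oplus> Y = V.\<close>
definition distant :: "'v::ab_group_add set \<Rightarrow> 'v set \<Rightarrow> bool" where
  "distant X Y \<longleftrightarrow> X \<inter> Y = {0} \<and> ssum X Y = UNIV"

definition lspan :: "('k::division_ring \<Rightarrow> 'v::ab_group_add \<Rightarrow> 'v) \<Rightarrow> 'v set \<Rightarrow> 'v set" where
  "lspan sc S = \<Inter>{X. subspace sc X \<and> S \<subseteq> X}"

text \<open>dim((X+Y)/X) = 1: the quotient space (X+Y)/X is spanned by a single nonzero coset,
  i.e. there is v \<in> X+Y, v \<notin> X, with X+Y = span(X \<union> {v}).\<close>
definition quot_dim_one :: "('k::division_ring \<Rightarrow> 'v::ab_group_add \<Rightarrow> 'v) \<Rightarrow> 'v set \<Rightarrow> 'v set \<Rightarrow> bool" where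
  "quot_dim_one sc W X \<longleftrightarrow> (\<exists>v\<in>W. v \<notin> X \<and> W = lspan sc (insert v X))"

definition adjacent :: "('k::division_ring \<Rightarrow> 'v::ab_group_add \<Rightarrow> 'v) \<Rightarrow> 'v set \<Rightarrow> 'v set \<Rightarrow> bool" where
  "adjacent sc X Y \<longleftrightarrow> quot_dim_one sc (ssum X Y) X \<and> quot_dim_one sc (ssum X Y) Y"

end

theory Submission
  imports Defs
begin

text \<open>
  (a) \<Longrightarrow> (b): write P + Q = P + Kq = Q + Kp and take the third point R = (P \<inter> Q) + K(p + q) on
  the line through P and Q. If X \<oplus> R = V, decompose p = x + r with x \<in> X, r \<in> R; then x lies in
  P + Q but not in R, and X is a complement of whichever of P, Q does not contain x.

  (b) \<Longrightarrow> (a): by Zorn, every subspace meeting R trivially extends to a complement of R, even inside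
  any subspace H with R + H = V. Complements through span{v, w} with v \<in> P, w \<in> Q show that
  P \<inter> Q \<subseteq> R and that none of P, Q, R contains another. Complements inside a hyperplane that
  contains Q + Kv but misses c \<in> R show R \<subseteq> Q + Kv for every v \<in> P \<setminus> R, and this forces
  (P + Q)/P and (P + Q)/Q to be one-dimensional.
\<close>

lemma lin_iso_comp:
  assumes "lin_iso A addA scA B addB scB f" "lin_iso B addB scB C addC scC g"
  shows "lin_iso A addA scA C addC scC (g \<circ> f)"
proof -
  have bij: "bij_betw f A B" "bij_betw g B C" using assms unfolding lin_iso_def by blast+
  have "\<And>x. x \<in> A \<Longrightarrow> f x \<in> B" using bij(1) bij_betwE by blast
  then show ?thesis using assms bij_betw_trans[OF bij] unfolding lin_iso_def by simp
qed

lemma lin_iso_inv_into: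
  assumes f: "lin_iso A addA scA B addB scB f"
    and closed: "\<forall>x\<in>A. \<forall>y\<in>A. addA x y \<in> A" "\<forall>c. \<forall>x\<in>A. scA c x \<in> A"
  shows "lin_iso B addB scB A addA scA (inv_into A f)"
proof -
  have bij: "bij_betw f A B"
    and add: "\<forall>x\<in>A. \<forall>y\<in>A. f (addA x y) = addB (f x) (f y)"
    and scale: "\<forall>c. \<forall>x\<in>A. f (scA c x) = scB c (f x)"
    using f unfolding lin_iso_def by blast+
  have inv_bij: "bij_betw (inv_into A f) B A" using bij by (rule bij_betw_inv_into)
  have inv_mem: "\<And>b. b \<in> B \<Longrightarrow> inv_into A f b \<in> A" using inv_bij bij_betwE by blast
  have right: "\<And>b. b \<in> B \<Longrightarrow> f (inv_into A f b) = b" using bij by (meson bij_betw_inv_into_right)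
  have left: "\<And>a. a \<in> A \<Longrightarrow> inv_into A f (f a) = a" using bij by (meson bij_betw_inv_into_left)
  show ?thesis unfolding lin_iso_def
  proof (intro conjI inv_bij ballI allI)
    fix x y assume "x \<in> B" "y \<in> B"
    then have "addB x y = f (addA (inv_into A f x) (inv_into A f y))" using add inv_mem right by auto
    then show "inv_into A f (addB x y) = addA (inv_into A f x) (inv_into A f y)"
      using left closed inv_mem \<open>x \<in> B\<close> \<open>y \<in> B\<close> by auto
  next
    fix c x assume "x \<in> B"
    then have "scB c x = f (scA c (inv_into A f x))" using scale inv_mem right by auto
    then show "inv_into A f (scB c x) = scA c (inv_into A f x)"
      using left closed inv_mem \<open>x \<in> B\<close> by auto
  qed
qed

lemma ssum_commute: "ssum X Y = ssum Y X"
  unfolding ssum_def by (auto, (metis add.commute)+)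

lemma distant_commute: "distant X Y \<Longrightarrow> distant Y X"
  unfolding distant_def by (auto simp: ssum_commute)

locale left_vector_space =
  fixes sc :: "'k::division_ring \<Rightarrow> 'v::ab_group_add \<Rightarrow> 'v"
  assumes left_vs: "left_vs sc"
begin

lemma scale_add_right: "sc a (u + v) = sc a u + sc a v"
  using left_vs unfolding left_vs_def by blast

lemma scale_add_left: "sc (a + b) v = sc a v + sc b v"
  using left_vs unfolding left_vs_def by blast

lemma scale_scale: "sc a (sc b v) = sc (a * b) v"
  using left_vs unfolding left_vs_def by auto

lemma scale_one [simp]: "sc 1 v = v"
  using left_vs unfolding left_vs_def by blast

lemma scale_zero_right [simp]: "sc a 0 = 0"
  using scale_add_right[of a 0 0] by simp

lemma scale_zero_left [simp]: "sc 0 v = 0"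
  using scale_add_left[of 0 0 v] by simp

lemma scale_minus_right: "sc a (- v) = - sc a v"
  using scale_add_right[of a v "- v"] by (simp add: eq_neg_iff_add_eq_0 add.commute)

lemma scale_diff_right: "sc a (u - v) = sc a u - sc a v"
  using scale_add_right[of a u "- v"] by (simp add: scale_minus_right)

lemma scale_minus_left: "sc (- a) v = - sc a v"
  using scale_add_left[of a "- a" v] by (simp add: eq_neg_iff_add_eq_0 add.commute)

lemma scale_diff_left: "sc (a - b) v = sc a v - sc b v"
  using scale_add_left[of a "- b" v] by (simp add: scale_minus_left)

lemma scale_inverse_cancel [simp]: "a \<noteq> 0 \<Longrightarrow> sc (inverse a) (sc a v) = v"
  by (simp add: scale_scale)

lemma subspace_0: "subspace sc X \<Longrightarrow> 0 \<in> X"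
  unfolding subspace_def by blast

lemma subspace_add: "subspace sc X \<Longrightarrow> x \<in> X \<Longrightarrow> y \<in> X \<Longrightarrow> x + y \<in> X"
  unfolding subspace_def by blast

lemma subspace_scale: "subspace sc X \<Longrightarrow> x \<in> X \<Longrightarrow> sc a x \<in> X"
  unfolding subspace_def by blast

lemma subspace_neg: "subspace sc X \<Longrightarrow> x \<in> X \<Longrightarrow> - x \<in> X"
  using subspace_scale[of X x "- 1"] by (simp add: scale_minus_left)

lemma subspace_diff: "subspace sc X \<Longrightarrow> x \<in> X \<Longrightarrow> y \<in> X \<Longrightarrow> x - y \<in> X"
  using subspace_add[of X x "- y"] subspace_neg[of X y] by simp

lemma subspace_scale_cancel: "subspace sc X \<Longrightarrow> a \<noteq> 0 \<Longrightarrow> sc a x \<in> X \<Longrightarrow> x \<in> X"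
  using subspace_scale[of X "sc a x" "inverse a"] by simp

lemma subspace_UNIV: "subspace sc UNIV"
  unfolding subspace_def by simp

lemma subspace_Int: "subspace sc X \<Longrightarrow> subspace sc Y \<Longrightarrow> subspace sc (X \<inter> Y)"
  unfolding subspace_def by blast

lemma subspace_zero: "subspace sc {0}"
  unfolding subspace_def by simp

lemma subset_ssum_left: "subspace sc Y \<Longrightarrow> X \<subseteq> ssum X Y"
  unfolding ssum_def using subspace_0 by force

lemma subset_ssum_right: "subspace sc X \<Longrightarrow> Y \<subseteq> ssum X Y"
  unfolding ssum_def using subspace_0 by force

lemma ssum_subspace:
  assumes X: "subspace sc X" and Y: "subspace sc Y"
  shows "subspace sc (ssum X Y)"
  unfolding subspace_def
proof (intro conjI ballI allI)
  show "0 \<in> ssum X Y" using subset_ssum_left[OF Y] subspace_0[OF X] by blast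
next
  fix u v assume "u \<in> ssum X Y" "v \<in> ssum X Y"
  then obtain x y x' y' where "x \<in> X" "y \<in> Y" "x' \<in> X" "y' \<in> Y" "u = x + y" "v = x' + y'"
    unfolding ssum_def by blast
  then show "u + v \<in> ssum X Y" unfolding ssum_def
    by (intro CollectI exI[of _ "x + x'"] exI[of _ "y + y'"])
       (simp add: subspace_add[OF X] subspace_add[OF Y] algebra_simps)
next
  fix a u assume "u \<in> ssum X Y"
  then obtain x y where "x \<in> X" "y \<in> Y" "u = x + y" unfolding ssum_def by blast
  then show "sc a u \<in> ssum X Y" unfolding ssum_def
    by (intro CollectI exI[of _ "sc a x"] exI[of _ "sc a y"])
       (simp add: subspace_scale[OF X] subspace_scale[OF Y] scale_add_right)
qed

definition plus_line :: "'v set \<Rightarrow> 'v \<Rightarrow> 'v set" where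
  "plus_line U v = {u + sc a v | u a. u \<in> U}"

lemma plus_line_subspace:
  assumes U: "subspace sc U"
  shows "subspace sc (plus_line U v)"
  unfolding subspace_def plus_line_def
proof (intro conjI ballI allI)
  show "0 \<in> {u + sc a v |u a. u \<in> U}"
    using subspace_0[OF U] by (auto intro!: exI[of _ 0])
next
  fix x y assume "x \<in> {u + sc a v |u a. u \<in> U}" "y \<in> {u + sc a v |u a. u \<in> U}"
  then obtain u1 a1 u2 a2 where "u1 \<in> U" "u2 \<in> U" "x = u1 + sc a1 v" "y = u2 + sc a2 v" by blast
  then show "x + y \<in> {u + sc a v |u a. u \<in> U}"
    by (intro CollectI exI[of _ "u1 + u2"] exI[of _ "a1 + a2"])
       (simp add: scale_add_left subspace_add[OF U] algebra_simps)
next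
  fix c x assume "x \<in> {u + sc a v |u a. u \<in> U}"
  then obtain u1 a1 where "u1 \<in> U" "x = u1 + sc a1 v" by blast
  then show "sc c x \<in> {u + sc a v |u a. u \<in> U}"
    by (intro CollectI exI[of _ "sc c u1"] exI[of _ "c * a1"])
       (simp add: scale_add_right scale_scale subspace_scale[OF U])
qed

lemma subset_plus_line: "subspace sc U \<Longrightarrow> U \<subseteq> plus_line U v"
  unfolding plus_line_def by (force intro: exI[of _ 0])

lemma scale_mem_plus_line: "subspace sc U \<Longrightarrow> sc a v \<in> plus_line U v"
  unfolding plus_line_def by (rule CollectI, rule exI[of _ 0], rule exI[of _ a]) (simp add: subspace_0)

lemma mem_plus_line: "subspace sc U \<Longrightarrow> v \<in> plus_line U v"
  using scale_mem_plus_line[of U 1 v] by simp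

lemma plus_line_least: "subspace sc W \<Longrightarrow> U \<subseteq> W \<Longrightarrow> v \<in> W \<Longrightarrow> plus_line U v \<subseteq> W"
  unfolding plus_line_def using subspace_add subspace_scale by blast

lemma lspan_insert_eq_plus_line:
  assumes "subspace sc U"
  shows "lspan sc (insert v U) = plus_line U v"
proof
  show "lspan sc (insert v U) \<subseteq> plus_line U v"
    unfolding lspan_def
    using plus_line_subspace[OF assms] subset_plus_line[OF assms] mem_plus_line[OF assms] by blast
  show "plus_line U v \<subseteq> lspan sc (insert v U)"
    unfolding lspan_def using plus_line_least by blast
qed

lemma plus_line_exchange:
  assumes U: "subspace sc U" and x: "x \<in> plus_line U y" "x \<notin> U"
  shows "plus_line U y \<subseteq> plus_line U x"
proof -
  from x obtain u a where u: "u \<in> U" "x = u + sc a y" unfolding plus_line_def by blast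
  have "a \<noteq> 0" using u x by auto
  then have "y = sc (inverse a) (x - u)" using u by simp
  then have "y \<in> plus_line U x"
    using plus_line_subspace[OF U] subset_plus_line[OF U] mem_plus_line[OF U] u
    by (metis subset_iff subspace_diff subspace_scale)
  then show ?thesis using plus_line_least[OF plus_line_subspace[OF U] subset_plus_line[OF U]] by blast
qed

lemma line_Int_eq_zero:
  assumes U: "subspace sc U" and v: "v \<notin> U"
  shows "plus_line {0} v \<inter> U = {0}"
proof -
  have "z = 0" if "z \<in> plus_line {0} v" "z \<in> U" for z
  proof -
    have "\<exists>a. z = sc a v" using that(1) unfolding plus_line_def by auto
    then obtain a where a: "z = sc a v" ..
    show ?thesis
      using subspace_scale_cancel[OF U, of a v] a that(2) v by (cases "a = 0") auto
  qed
  then show ?thesis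
    using subspace_0[OF U] subspace_0[OF plus_line_subspace[OF subspace_zero]] by blast
qed

lemma line_subset_plus_line: "subspace sc U \<Longrightarrow> plus_line {0} v \<subseteq> plus_line U v"
  by (intro plus_line_least plus_line_subspace mem_plus_line) (auto intro: subspace_0 plus_line_subspace)

lemma chain_Union_subspace:
  assumes C: "C \<in> chains {Y. subspace sc Y \<and> P Y}" "C \<noteq> {}"
  shows "subspace sc (\<Union>C)"
proof -
  have sub: "\<And>Y. Y \<in> C \<Longrightarrow> subspace sc Y" using C unfolding chains_def by blast
  have chain: "\<And>A B. A \<in> C \<Longrightarrow> B \<in> C \<Longrightarrow> A \<subseteq> B \<or> B \<subseteq> A"
    using C unfolding chains_def chain_subset_def by blast
  show ?thesis unfolding subspace_def
  proof (intro conjI ballI allI)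
    show "0 \<in> \<Union>C" using C(2) sub subspace_0 by blast
  next
    fix x y assume "x \<in> \<Union>C" "y \<in> \<Union>C"
    then obtain A B where "A \<in> C" "B \<in> C" "x \<in> A" "y \<in> B" by blast
    then show "x + y \<in> \<Union>C" using chain[of A B] sub subspace_add by (metis UnionI subset_iff)
  next
    fix a x assume "x \<in> \<Union>C"
    then show "sc a x \<in> \<Union>C" using sub subspace_scale by blast
  qed
qed

text \<open>A maximal subspace between Y0 and T meeting S trivially spans T together with S: otherwise
  adding a vector t \<in> T outside S + Y would keep it trivial on S.\<close>

lemma exists_complement_within:
  assumes S: "subspace sc S" and T: "subspace sc T"
    and Y0: "subspace sc Y0" "Y0 \<subseteq> T" "Y0 \<inter> S = {0}"
  shows "\<exists>Y. subspace sc Y \<and> Y0 \<subseteq> Y \<and> Y \<subseteq> T \<and> Y \<inter> S = {0} \<and> T \<subseteq> ssum S Y"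
proof -
  define A where "A = {Y. subspace sc Y \<and> (Y0 \<subseteq> Y \<and> Y \<subseteq> T \<and> Y \<inter> S = {0})}"
  have "\<forall>C\<in>chains A. \<exists>U\<in>A. \<forall>X\<in>C. X \<subseteq> U"
  proof
    fix C assume C: "C \<in> chains A"
    show "\<exists>U\<in>A. \<forall>X\<in>C. X \<subseteq> U"
    proof (cases "C = {}")
      case True then show ?thesis using Y0 unfolding A_def by auto
    next
      case False
      have "subspace sc (\<Union>C)" using chain_Union_subspace[OF C[unfolded A_def] False] .
      moreover have "\<forall>Y\<in>C. Y0 \<subseteq> Y \<and> Y \<subseteq> T \<and> Y \<inter> S = {0}"
        using C unfolding A_def chains_def by blast
      ultimately have "\<Union>C \<in> A" using False subspace_0[OF S] unfolding A_def by blast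
      then show ?thesis by blast
    qed
  qed
  from Zorn_Lemma2[OF this] obtain M where "M \<in> A" and max: "\<forall>X\<in>A. M \<subseteq> X \<longrightarrow> X = M"
    by blast
  then have M: "subspace sc M" "Y0 \<subseteq> M" "M \<subseteq> T" "M \<inter> S = {0}" unfolding A_def by auto
  have "t \<in> ssum S M" if t: "t \<in> T" for t
  proof (rule ccontr)
    assume nt: "t \<notin> ssum S M"
    have "z = 0" if z: "z \<in> plus_line M t" "z \<in> S" for z
    proof -
      obtain m a where m: "m \<in> M" "z = m + sc a t" using z unfolding plus_line_def by blast
      show ?thesis
      proof (cases "a = 0")
        case True then show ?thesis using m z M by auto
      next
        case False
        then have "t = sc (inverse a) z + - sc (inverse a) m"
          using m by (simp flip: scale_diff_right)
        moreover have "sc (inverse a) z \<in> S" using z subspace_scale[OF S] by blast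
        moreover have "- sc (inverse a) m \<in> M"
          using m subspace_scale[OF M(1)] subspace_neg[OF M(1)] by blast
        ultimately show ?thesis using nt unfolding ssum_def by blast
      qed
    qed
    then have "plus_line M t \<in> A" unfolding A_def
      using plus_line_subspace[OF M(1)] subset_plus_line[OF M(1)] M plus_line_least[OF T M(3) t]
        subspace_0[OF plus_line_subspace[OF M(1)]] subspace_0[OF S] by blast
    then have "plus_line M t = M" using max subset_plus_line[OF M(1)] by blast
    then have "t \<in> M" using mem_plus_line[OF M(1)] by blast
    then show False using nt subspace_0[OF S] unfolding ssum_def by force
  qed
  then show ?thesis using M by blast
qed

lemma exists_complement_between:
  assumes R: "subspace sc R" and H: "subspace sc H"
    and Y0: "subspace sc Y0" "Y0 \<subseteq> H" "Y0 \<inter> R = {0}"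
    and RH: "ssum R H = UNIV"
  shows "\<exists>X. subspace sc X \<and> distant X R \<and> Y0 \<subseteq> X \<and> X \<subseteq> H"
proof -
  have "Y0 \<inter> (R \<inter> H) = {0}" using Y0 subspace_0[OF R] subspace_0[OF H] by blast
  from exists_complement_within[OF subspace_Int[OF R H] H Y0(1,2) this] obtain Y where
    Y: "subspace sc Y" "Y0 \<subseteq> Y" "Y \<subseteq> H" "Y \<inter> (R \<inter> H) = {0}" "H \<subseteq> ssum (R \<inter> H) Y"
    by blast
  have "z \<in> ssum Y R" for z
  proof -
    obtain r h where rh: "r \<in> R" "h \<in> H" "z = r + h" using RH unfolding ssum_def by blast
    then obtain s y where sy: "s \<in> R" "y \<in> Y" "h = s + y" using Y(5) unfolding ssum_def by blast
    have "z = y + (r + s)" using rh sy by (simp add: algebra_simps)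
    moreover have "r + s \<in> R" using rh sy subspace_add[OF R] by blast
    ultimately show ?thesis unfolding ssum_def using sy by blast
  qed
  then show ?thesis using Y unfolding distant_def by blast
qed

lemma exists_complement:
  assumes R: "subspace sc R"
  shows "\<exists>X. subspace sc X \<and> distant X R"
proof -
  have "ssum R UNIV = UNIV" using subset_ssum_right[OF R] by blast
  then show ?thesis
    using exists_complement_between[OF R subspace_UNIV subspace_zero] subspace_0[OF R] by blast
qed

lemma exists_hyperplane:
  assumes U: "subspace sc U" and c: "c \<notin> U"
  shows "\<exists>H. subspace sc H \<and> U \<subseteq> H \<and> c \<notin> H \<and> plus_line H c = UNIV"
proof -
  have L: "subspace sc (plus_line {0} c)" by (rule plus_line_subspace[OF subspace_zero])
  have "U \<inter> plus_line {0} c = {0}" using line_Int_eq_zero[OF U c] by blast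
  from exists_complement_within[OF L subspace_UNIV U _ this] obtain H where
    H: "subspace sc H" "U \<subseteq> H" "H \<inter> plus_line {0} c = {0}" "UNIV \<subseteq> ssum (plus_line {0} c) H"
    by auto
  have "c \<noteq> 0" using c subspace_0[OF U] by blast
  then have "c \<notin> H" using H(3) mem_plus_line[OF subspace_zero, of c] by blast
  moreover have "z \<in> plus_line H c" for z
  proof -
    obtain s h where "s \<in> plus_line {0} c" "h \<in> H" "z = s + h" using H(4) unfolding ssum_def by blast
    then show ?thesis unfolding plus_line_def by (auto simp: add.commute)
  qed
  ultimately show ?thesis using H by blast
qed

lemma coset_eq_iff:
  assumes X: "subspace sc X"
  shows "coset X a = coset X b \<longleftrightarrow> a - b \<in> X"
proof
  assume "coset X a = coset X b"
  moreover have "a \<in> coset X a" unfolding coset_def using subspace_0[OF X] by force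
  ultimately obtain x where "x \<in> X" "a = b + x" unfolding coset_def by blast
  then show "a - b \<in> X" by simp
next
  assume ab: "a - b \<in> X"
  show "coset X a = coset X b" unfolding coset_def
  proof safe
    fix x assume "x \<in> X"
    then have "(a - b) + x \<in> X" using ab subspace_add[OF X] by blast
    then show "\<exists>y. a + x = b + y \<and> y \<in> X" by (intro exI[of _ "(a - b) + x"]) auto
  next
    fix x assume "x \<in> X"
    then have "- (a - b) + x \<in> X" using ab subspace_add[OF X] subspace_neg[OF X] by blast
    then show "\<exists>y. b + x = a + y \<and> y \<in> X" by (intro exI[of _ "- (a - b) + x"]) auto
  qed
qed

lemma qadd_coset:
  assumes X: "subspace sc X"
  shows "qadd X (coset X a) (coset X b) = coset X (a + b)"
proof
  show "qadd X (coset X a) (coset X b) \<subseteq> coset X (a + b)"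
  proof
    fix z assume "z \<in> qadd X (coset X a) (coset X b)"
    then obtain x y where xy: "x \<in> X" "y \<in> X" "z = (a + x) + (b + y)"
      unfolding qadd_def coset_def by blast
    then have "x + y \<in> X" using subspace_add[OF X] by blast
    with xy show "z \<in> coset X (a + b)"
      unfolding coset_def by (auto simp: algebra_simps intro!: exI[of _ "x + y"])
  qed
  show "coset X (a + b) \<subseteq> qadd X (coset X a) (coset X b)"
  proof
    fix z assume "z \<in> coset X (a + b)"
    then obtain x where x: "x \<in> X" "z = (a + x) + b" unfolding coset_def by (auto simp: algebra_simps)
    moreover have "a + x \<in> coset X a" "b \<in> coset X b"
      using x subspace_0[OF X] unfolding coset_def by force+
    ultimately show "z \<in> qadd X (coset X a) (coset X b)" unfolding qadd_def by blast
  qed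
qed

lemma qscale_coset:
  assumes X: "subspace sc X"
  shows "qscale sc X c (coset X a) = coset X (sc c a)"
proof
  show "qscale sc X c (coset X a) \<subseteq> coset X (sc c a)"
  proof
    fix z assume "z \<in> qscale sc X c (coset X a)"
    then obtain x y where xy: "x \<in> X" "y \<in> X" "z = sc c (a + x) + y"
      unfolding qscale_def coset_def by blast
    then have "sc c x + y \<in> X" using subspace_add[OF X] subspace_scale[OF X] by blast
    with xy show "z \<in> coset X (sc c a)"
      unfolding coset_def by (auto simp: algebra_simps scale_add_right intro!: exI[of _ "sc c x + y"])
  qed
  show "coset X (sc c a) \<subseteq> qscale sc X c (coset X a)"
  proof
    fix z assume "z \<in> coset X (sc c a)"
    moreover have "a \<in> coset X a" using subspace_0[OF X] unfolding coset_def by force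
    ultimately show "z \<in> qscale sc X c (coset X a)" unfolding qscale_def coset_def by blast
  qed
qed

lemma complement_lin_iso_quot:
  assumes X: "subspace sc X" and Y: "subspace sc Y" and XY: "distant X Y"
  shows "lin_iso Y (+) sc (quot X) (qadd X) (qscale sc X) (coset X)"
  unfolding lin_iso_def bij_betw_def
proof (intro conjI ballI allI)
  show "inj_on (coset X) Y"
  proof (rule inj_onI)
    fix a b assume "a \<in> Y" "b \<in> Y" "coset X a = coset X b"
    then have "a - b \<in> X \<inter> Y" using coset_eq_iff[OF X] subspace_diff[OF Y] by blast
    then show "a = b" using XY unfolding distant_def by auto
  qed
  have "coset X v \<in> coset X ` Y" for v
  proof -
    have "v \<in> ssum X Y" using XY unfolding distant_def by blast
    then obtain x y where "x \<in> X" "y \<in> Y" "v = x + y" unfolding ssum_def by blast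
    then have "coset X v = coset X y" using coset_eq_iff[OF X] by simp
    then show ?thesis using \<open>y \<in> Y\<close> by blast
  qed
  then show "coset X ` Y = quot X" unfolding quot_def by blast
qed (simp_all add: qadd_coset[OF X] qscale_coset[OF X])

lemma Gr_subspace: "R \<in> Gr sc \<Longrightarrow> subspace sc R"
  unfolding Gr_def by blast

text \<open>X \<cong> V/R \<cong> R \<cong> V/X, the outer isomorphisms being the coset maps.\<close>

lemma Gr_complement:
  assumes R: "R \<in> Gr sc" and X: "subspace sc X" and RX: "distant R X"
  shows "X \<in> Gr sc"
proof -
  have Rs: "subspace sc R" using R by (rule Gr_subspace)
  obtain f where f: "lin_iso R (+) sc (quot R) (qadd R) (qscale sc R) f"
    using R unfolding Gr_def by blast
  have "lin_iso (quot R) (qadd R) (qscale sc R) R (+) sc (inv_into R f)"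
    by (rule lin_iso_inv_into[OF f]) (use Rs subspace_add subspace_scale in blast)+
  from lin_iso_comp[OF lin_iso_comp[OF complement_lin_iso_quot[OF Rs X RX] this]
      complement_lin_iso_quot[OF X Rs distant_commute[OF RX]]]
  show ?thesis unfolding Gr_def using X by blast
qed

lemma complement_subset_eq:
  assumes R: "subspace sc R" and XR: "distant X R" and XP: "distant X P" and PR: "P \<subseteq> R"
  shows "R = P"
proof
  show "R \<subseteq> P"
  proof
    fix c assume c: "c \<in> R"
    have "c \<in> ssum X P" using XP unfolding distant_def by blast
    then obtain x p where xp: "x \<in> X" "p \<in> P" "c = x + p" unfolding ssum_def by blast
    then have "x \<in> R" using c PR subspace_diff[OF R, of c p] by auto
    then have "x = 0" using xp XR unfolding distant_def by blast
    then show "c \<in> P" using xp by simp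
  qed
qed (rule PR)

definition distant_cover :: "'v set \<Rightarrow> 'v set \<Rightarrow> 'v set \<Rightarrow> bool" where
  "distant_cover R P Q \<longleftrightarrow> (\<forall>X\<in>Gr sc. distant X R \<longrightarrow> distant X P \<or> distant X Q)"

lemma distant_cover_commute: "distant_cover R P Q \<Longrightarrow> distant_cover R Q P"
  unfolding distant_cover_def by blast

lemma distant_coverD:
  assumes "R \<in> Gr sc" "distant_cover R P Q" "subspace sc X" "distant X R"
  shows "distant X P \<or> distant X Q"
  using assms Gr_complement[OF assms(1,3) distant_commute] unfolding distant_cover_def by blast

text \<open>A complement of R through span{v, w} would meet both P and Q.\<close>

lemma distant_cover_combination_mem:
  assumes R: "R \<in> Gr sc" and cover: "distant_cover R P Q"
    and v: "v \<in> P" "v \<noteq> 0" and w: "w \<in> Q" "w \<noteq> 0"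
  shows "\<exists>s t. sc s v + sc t w \<in> R \<and> sc s v + sc t w \<noteq> 0"
proof (rule ccontr)
  assume indep: "\<not> ?thesis"
  have Rs: "subspace sc R" using R by (rule Gr_subspace)
  define Y0 where "Y0 = plus_line (plus_line {0} v) w"
  have Y0: "subspace sc Y0" unfolding Y0_def by (intro plus_line_subspace subspace_zero)
  have vw: "v \<in> Y0" "w \<in> Y0" unfolding Y0_def
    using subset_plus_line mem_plus_line plus_line_subspace subspace_zero by blast+
  have "z = 0" if "z \<in> Y0" "z \<in> R" for z
    using that indep unfolding Y0_def plus_line_def by auto
  then have "Y0 \<inter> R = {0}" using subspace_0[OF Rs] subspace_0[OF Y0] by blast
  moreover have "ssum R UNIV = UNIV" using subset_ssum_right[OF Rs] by blast
  ultimately obtain X where X: "subspace sc X" "distant X R" "Y0 \<subseteq> X"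
    using exists_complement_between[OF Rs subspace_UNIV Y0] by blast
  then have "distant X P \<or> distant X Q" using distant_coverD[OF R cover] by blast
  then show False using X(3) vw v w unfolding distant_def by blast
qed

lemma distant_cover_Int_subset:
  assumes R: "R \<in> Gr sc" and cover: "distant_cover R P Q"
  shows "P \<inter> Q \<subseteq> R"
proof
  fix m assume m: "m \<in> P \<inter> Q"
  have Rs: "subspace sc R" using R by (rule Gr_subspace)
  show "m \<in> R"
  proof (rule ccontr)
    assume mR: "m \<notin> R"
    then have "m \<noteq> 0" using subspace_0[OF Rs] by blast
    then obtain s t where st: "sc s m + sc t m \<in> R" "sc s m + sc t m \<noteq> 0"
      using distant_cover_combination_mem[OF R cover] m by blast
    then have "s + t \<noteq> 0" by (auto simp flip: scale_add_left)
    then show False using st mR subspace_scale_cancel[OF Rs] by (simp flip: scale_add_left)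
  qed
qed

text \<open>Otherwise take a hyperplane H \<supseteq> Q + Kv missing c; a complement of R through v inside H
  meets P and cannot span c together with Q.\<close>

lemma distant_cover_mem_plus_line:
  assumes R: "R \<in> Gr sc" and Q: "subspace sc Q" and cover: "distant_cover R P Q"
    and c: "c \<in> R" and v: "v \<in> P" "v \<notin> R"
  shows "c \<in> plus_line Q v"
proof (rule ccontr)
  assume "c \<notin> plus_line Q v"
  then obtain H where H: "subspace sc H" "plus_line Q v \<subseteq> H" "c \<notin> H" "plus_line H c = UNIV"
    using exists_hyperplane[OF plus_line_subspace[OF Q]] by blast
  have Rs: "subspace sc R" using R by (rule Gr_subspace)
  have "z \<in> ssum R H" for z
  proof -
    obtain h a where "h \<in> H" "z = h + sc a c" using H(4) unfolding plus_line_def by blast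
    then show ?thesis using subspace_scale[OF Rs c] unfolding ssum_def
      by (intro CollectI exI[of _ "sc a c"] exI[of _ h]) (simp add: add.commute)
  qed
  then have "ssum R H = UNIV" by blast
  moreover have "plus_line {0} v \<subseteq> H" using H(2) line_subset_plus_line[OF Q] by blast
  ultimately obtain X where X: "subspace sc X" "distant X R" "plus_line {0} v \<subseteq> X" "X \<subseteq> H"
    using exists_complement_between[OF Rs H(1) plus_line_subspace[OF subspace_zero]]
      line_Int_eq_zero[OF Rs v(2)] by blast
  have "\<not> distant X P"
  proof
    assume "distant X P"
    moreover have "v \<in> X" using X(3) mem_plus_line[OF subspace_zero] by blast
    moreover have "v \<noteq> 0" using v subspace_0[OF Rs] by blast
    ultimately show False using v unfolding distant_def by blast
  qed
  moreover have "\<not> distant X Q"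
  proof
    assume "distant X Q"
    then obtain x q where "x \<in> X" "q \<in> Q" "c = x + q" unfolding distant_def ssum_def by blast
    then have "c \<in> H" using X(4) H(2) subset_plus_line[OF Q] subspace_add[OF H(1)] by blast
    then show False using H(3) by blast
  qed
  ultimately show False using distant_coverD[OF R cover X(1,2)] by blast
qed

lemma distant_cover_not_subset:
  assumes R: "R \<in> Gr sc" and P: "subspace sc P" and Q: "subspace sc Q"
    and cover: "distant_cover R P Q" and RP: "R \<noteq> P" and RQ: "R \<noteq> Q"
  shows "\<not> Q \<subseteq> R"
proof
  assume QR: "Q \<subseteq> R"
  have Rs: "subspace sc R" using R by (rule Gr_subspace)
  show False
  proof (cases "P \<subseteq> R")
    case True
    obtain X where X: "subspace sc X" "distant X R" using exists_complement[OF Rs] by blast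
    then consider "distant X P" | "distant X Q" using distant_coverD[OF R cover] by blast
    then show False
      using complement_subset_eq[OF Rs X(2)] True QR RP RQ by cases blast+
  next
    case False
    then obtain v where v: "v \<in> P" "v \<notin> R" by blast
    obtain c where c: "c \<in> R" "c \<notin> Q" using QR RQ by blast
    then obtain q a where qa: "q \<in> Q" "c = q + sc a v"
      using distant_cover_mem_plus_line[OF R Q cover c(1) v] unfolding plus_line_def by blast
    then have "a \<noteq> 0" using c by auto
    moreover have "sc a v \<in> R" using qa c QR subspace_diff[OF Rs, of c q] by auto
    ultimately show False using subspace_scale_cancel[OF Rs] v by blast
  qed
qed

lemma distant_cover_not_subset_other:
  assumes "R \<in> Gr sc" "subspace sc P" "subspace sc Q" "distant_cover R P Q" "R \<noteq> P" "R \<noteq> Q"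
  shows "\<not> Q \<subseteq> P"
  using distant_cover_not_subset[OF assms] distant_cover_Int_subset[OF assms(1,4)] by blast

lemma distant_cover_not_subset_point:
  assumes R: "R \<in> Gr sc" and P: "subspace sc P" and Q: "subspace sc Q"
    and cover: "distant_cover R P Q" and RP: "R \<noteq> P" and RQ: "R \<noteq> Q"
  shows "\<not> R \<subseteq> P"
proof
  assume RsubP: "R \<subseteq> P"
  have Rs: "subspace sc R" using R by (rule Gr_subspace)
  obtain v where v: "v \<in> P" "v \<notin> R" using RsubP RP by blast
  obtain q where q: "q \<in> Q" "q \<notin> P"
    using distant_cover_not_subset_other[OF assms] by blast
  have "v \<noteq> 0" "q \<noteq> 0" using v q subspace_0[OF Rs] subspace_0[OF P] by auto
  then obtain s t where st: "sc s v + sc t q \<in> R" "sc s v + sc t q \<noteq> 0"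
    using distant_cover_combination_mem[OF R cover v(1) _ q(1)] by blast
  have "t = 0"
  proof (rule ccontr)
    assume "t \<noteq> 0"
    moreover have "sc t q \<in> P"
      using st(1) RsubP subspace_diff[OF P, of "sc s v + sc t q" "sc s v"] subspace_scale[OF P v(1)]
      by auto
    ultimately show False using subspace_scale_cancel[OF P] q by blast
  qed
  then have "s \<noteq> 0" "sc s v \<in> R" using st by auto
  then show False using subspace_scale_cancel[OF Rs] v by blast
qed

lemma distant_cover_subset_plus_line:
  assumes R: "R \<in> Gr sc" and P: "subspace sc P" and Q: "subspace sc Q"
    and cover: "distant_cover R P Q" and RP: "R \<noteq> P" and RQ: "R \<noteq> Q"
    and c: "c \<in> R" "c \<notin> P"
  shows "Q \<subseteq> plus_line P c"
proof -
  have Rs: "subspace sc R" using R by (rule Gr_subspace)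
  have outside: "y \<in> plus_line P c" if "y \<in> Q" "y \<notin> R" for y
    using distant_cover_mem_plus_line[OF R P distant_cover_commute[OF cover] c(1) that]
      plus_line_exchange[OF P _ c(2)] mem_plus_line[OF P] by blast
  obtain w where w: "w \<in> Q" "w \<notin> R" using distant_cover_not_subset[OF assms(1-6)] by blast
  show ?thesis
  proof
    fix y assume y: "y \<in> Q"
    show "y \<in> plus_line P c"
    proof (cases "y \<in> R")
      case True
      then have "w + y \<notin> R" using w subspace_diff[OF Rs, of "w + y" y] by auto
      then have "w + y \<in> plus_line P c" using outside w y subspace_add[OF Q] by blast
      then have "(w + y) - w \<in> plus_line P c"
        using outside[OF w] subspace_diff[OF plus_line_subspace[OF P]] by blast
      then show ?thesis by simp
    qed (use outside y in blast)
  qed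
qed

lemma ssum_eq_plus_line:
  assumes P: "subspace sc P" and Q: "subspace sc Q" and q: "q \<in> Q" "Q \<subseteq> plus_line P q"
  shows "ssum P Q = plus_line P q"
proof
  show "ssum P Q \<subseteq> plus_line P q"
    using q(2) subset_plus_line[OF P] subspace_add[OF plus_line_subspace[OF P]]
    unfolding ssum_def by blast
  show "plus_line P q \<subseteq> ssum P Q"
    using subspace_scale[OF Q q(1)] unfolding plus_line_def ssum_def by blast
qed

lemma quot_dim_one_ssum_iff:
  assumes P: "subspace sc P" and Q: "subspace sc Q"
  shows "quot_dim_one sc (ssum P Q) P \<longleftrightarrow> (\<exists>q\<in>Q. q \<notin> P \<and> ssum P Q = plus_line P q)"
proof
  assume "quot_dim_one sc (ssum P Q) P"
  then obtain v where v: "v \<in> ssum P Q" "v \<notin> P" "ssum P Q = plus_line P v"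
    unfolding quot_dim_one_def using lspan_insert_eq_plus_line[OF P] by auto
  then obtain p q where pq: "p \<in> P" "q \<in> Q" "v = p + q" unfolding ssum_def by blast
  then have qP: "q \<notin> P" using v subspace_add[OF P] by blast
  have "q \<in> ssum P Q" using subset_ssum_right[OF P] pq by blast
  then have "ssum P Q = plus_line P q"
    using v plus_line_exchange[OF P _ qP] plus_line_least[OF plus_line_subspace[OF P] subset_plus_line[OF P]]
    by blast
  then show "\<exists>q\<in>Q. q \<notin> P \<and> ssum P Q = plus_line P q" using pq qP by blast
next
  assume "\<exists>q\<in>Q. q \<notin> P \<and> ssum P Q = plus_line P q"
  then show "quot_dim_one sc (ssum P Q) P"
    unfolding quot_dim_one_def using subset_ssum_right[OF P] lspan_insert_eq_plus_line[OF P] by auto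
qed

lemma distant_cover_quot_dim_one:
  assumes R: "R \<in> Gr sc" and P: "subspace sc P" and Q: "subspace sc Q"
    and cover: "distant_cover R P Q" and RP: "R \<noteq> P" and RQ: "R \<noteq> Q"
  shows "quot_dim_one sc (ssum P Q) P"
proof -
  obtain q where q: "q \<in> Q" "q \<notin> P" using distant_cover_not_subset_other[OF assms] by blast
  obtain c where c: "c \<in> R" "c \<notin> P" using distant_cover_not_subset_point[OF assms] by blast
  have "Q \<subseteq> plus_line P c" by (rule distant_cover_subset_plus_line[OF assms c])
  moreover have "plus_line P c \<subseteq> plus_line P q"
    using plus_line_exchange[OF P _ q(2)] q(1) calculation by blast
  ultimately show ?thesis
    using quot_dim_one_ssum_iff[OF P Q] ssum_eq_plus_line[OF P Q q(1)] q by blast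
qed

lemma distant_exchange:
  assumes X: "subspace sc X" and Y: "subspace sc Y" and R: "subspace sc R" and XR: "distant X R"
    and RN: "R \<subseteq> N" and YN: "Y \<subseteq> N" and NR: "N \<subseteq> plus_line R x" and NY: "N \<subseteq> plus_line Y x"
    and x: "x \<in> X" "x \<notin> Y"
  shows "distant X Y"
proof -
  have "y = 0" if y: "y \<in> X" "y \<in> Y" for y
  proof -
    obtain r c where rc: "r \<in> R" "y = r + sc c x"
      using y YN NR unfolding plus_line_def by blast
    then have "r \<in> X" using y x subspace_diff[OF X, of y "sc c x"] subspace_scale[OF X] by auto
    then have "y = sc c x" using rc XR unfolding distant_def by auto
    then show ?thesis using subspace_scale_cancel[OF Y, of c x] y x by (cases "c = 0") auto
  qed
  moreover have "z \<in> ssum X Y" for z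
  proof -
    obtain x' r where xr: "x' \<in> X" "r \<in> R" "z = x' + r"
      using XR unfolding distant_def ssum_def by blast
    then obtain y c where yc: "y \<in> Y" "r = y + sc c x" using RN NY unfolding plus_line_def by blast
    have "z = (x' + sc c x) + y" using xr yc by (simp add: algebra_simps)
    moreover have "x' + sc c x \<in> X" using xr x subspace_add[OF X] subspace_scale[OF X] by blast
    ultimately show ?thesis unfolding ssum_def using yc by blast
  qed
  ultimately show ?thesis
    unfolding distant_def using subspace_0[OF X] subspace_0[OF Y] by blast
qed

context
  fixes P Q :: "'v set" and p q :: 'v
  assumes P: "subspace sc P" and Q: "subspace sc Q"
    and p: "p \<in> P" "p \<notin> Q" and q: "q \<in> Q" "q \<notin> P"
    and sum_P: "ssum P Q = plus_line P q" and sum_Q: "ssum P Q = plus_line Q p"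
begin

lemma plus_line_Int_subspace: "subspace sc (plus_line (P \<inter> Q) (p + q))"
  by (rule plus_line_subspace[OF subspace_Int[OF P Q]])

lemma plus_line_Int_subset_ssum: "plus_line (P \<inter> Q) (p + q) \<subseteq> ssum P Q"
proof (rule plus_line_least)
  show "subspace sc (ssum P Q)" by (rule ssum_subspace[OF P Q])
  show "P \<inter> Q \<subseteq> ssum P Q" using subset_ssum_left[OF Q] by blast
  show "p + q \<in> ssum P Q" using p q unfolding ssum_def by blast
qed

lemma ssum_subset_plus_line_Int: "ssum P Q \<subseteq> plus_line (plus_line (P \<inter> Q) (p + q)) p"
proof
  fix n assume "n \<in> ssum P Q"
  then obtain x b where xb: "x \<in> P" "n = x + sc b q" using sum_P unfolding plus_line_def by blast
  then have "x \<in> plus_line Q p" using sum_Q subset_ssum_left[OF Q] by blast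
  then obtain y a where ya: "y \<in> Q" "x = y + sc a p" unfolding plus_line_def by blast
  then have "y \<in> P" using xb p subspace_diff[OF P, of x "sc a p"] subspace_scale[OF P] by auto
  then have "y + sc b (p + q) \<in> plus_line (P \<inter> Q) (p + q)"
    using ya unfolding plus_line_def by blast
  moreover have "n = (y + sc b (p + q)) + sc (a - b) p"
    using xb ya by (simp add: scale_add_right scale_diff_left algebra_simps)
  ultimately show "n \<in> plus_line (plus_line (P \<inter> Q) (p + q)) p" unfolding plus_line_def by blast
qed

lemma notin_plus_line_Int: "p \<notin> plus_line (P \<inter> Q) (p + q)"
proof
  assume "p \<in> plus_line (P \<inter> Q) (p + q)"
  then obtain m a where ma: "m \<in> P \<inter> Q" "p = m + sc a (p + q)" unfolding plus_line_def by blast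
  show False
  proof (cases "a = 0")
    case True then show False using ma p by auto
  next
    case False
    have "sc a q = p - m - sc a p" using ma by (simp add: scale_add_right algebra_simps)
    moreover have "p - m - sc a p \<in> P"
      using ma p subspace_diff[OF P] subspace_scale[OF P] by blast
    ultimately show False using subspace_scale_cancel[OF P False] q by auto
  qed
qed

lemma plus_line_Int_neq: "plus_line (P \<inter> Q) (p + q) \<noteq> P" "plus_line (P \<inter> Q) (p + q) \<noteq> Q"
proof -
  have pq: "p + q \<in> plus_line (P \<inter> Q) (p + q)" by (rule mem_plus_line[OF subspace_Int[OF P Q]])
  show "plus_line (P \<inter> Q) (p + q) \<noteq> P"
    using pq p q subspace_diff[OF P, of "p + q" p] by auto
  show "plus_line (P \<inter> Q) (p + q) \<noteq> Q"
    using pq p q subspace_diff[OF Q, of "p + q" q] by auto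
qed

text \<open>The X-component x of p lies in P + Q outside R, so x spans P + Q over R and over
  whichever of P, Q misses it.\<close>

lemma distant_plus_line_Int:
  assumes X: "subspace sc X" and XR: "distant X (plus_line (P \<inter> Q) (p + q))"
  shows "distant X P \<or> distant X Q"
proof -
  let ?R = "plus_line (P \<inter> Q) (p + q)"
  have R: "subspace sc ?R" by (rule plus_line_Int_subspace)
  obtain x r where xr: "x \<in> X" "r \<in> ?R" "p = x + r"
    using XR unfolding distant_def ssum_def by blast
  have "x = p - r" using xr(3) by simp
  then have xN: "x \<in> ssum P Q"
    using xr(2) p(1) plus_line_Int_subset_ssum subset_ssum_left[OF Q]
      subspace_diff[OF ssum_subspace[OF P Q]] by blast
  have xR: "x \<notin> ?R" using xr notin_plus_line_Int subspace_add[OF R] by blast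
  have "x \<in> plus_line ?R p"
    using xr subspace_neg[OF R] unfolding plus_line_def
    by (intro CollectI exI[of _ "- r"] exI[of _ 1]) simp
  then have NR: "ssum P Q \<subseteq> plus_line ?R x"
    using ssum_subset_plus_line_Int plus_line_exchange[OF R _ xR] by blast
  have "x \<notin> P \<or> x \<notin> Q" using xR subset_plus_line[OF subspace_Int[OF P Q]] by blast
  then show ?thesis
  proof
    assume xP: "x \<notin> P"
    have "ssum P Q \<subseteq> plus_line P x" using sum_P xN plus_line_exchange[OF P _ xP] by blast
    then show ?thesis
      using distant_exchange[OF X P R XR plus_line_Int_subset_ssum subset_ssum_left[OF Q] NR _ xr(1) xP]
      by blast
  next
    assume xQ: "x \<notin> Q"
    have "ssum P Q \<subseteq> plus_line Q x" using sum_Q xN plus_line_exchange[OF Q _ xQ] by blast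
    then show ?thesis
      using distant_exchange[OF X Q R XR plus_line_Int_subset_ssum subset_ssum_right[OF P] NR _ xr(1) xQ]
      by blast
  qed
qed

end

lemma Gr_if_complements_distant:
  assumes P: "P \<in> Gr sc" and Q: "Q \<in> Gr sc" and R: "subspace sc R"
    and compl: "\<And>X. subspace sc X \<Longrightarrow> distant X R \<Longrightarrow> distant X P \<or> distant X Q"
  shows "R \<in> Gr sc"
proof -
  obtain X where X: "subspace sc X" "distant X R" using exists_complement[OF R] by blast
  then have "X \<in> Gr sc"
    using compl Gr_complement[OF P X(1)] Gr_complement[OF Q X(1)] distant_commute by blast
  then show ?thesis using Gr_complement[OF _ R X(2)] by blast
qed

lemma adjacent_imp_distant_cover:
  assumes PG: "P \<in> Gr sc" and QG: "Q \<in> Gr sc" and adj: "adjacent sc P Q"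
  shows "\<exists>R\<in>Gr sc. R \<noteq> P \<and> R \<noteq> Q \<and> distant_cover R P Q"
proof -
  have P: "subspace sc P" and Q: "subspace sc Q" using PG QG by (simp_all add: Gr_subspace)
  obtain q where q: "q \<in> Q" "q \<notin> P" "ssum P Q = plus_line P q"
    using adj quot_dim_one_ssum_iff[OF P Q] unfolding adjacent_def by blast
  obtain p where p: "p \<in> P" "p \<notin> Q" "ssum P Q = plus_line Q p"
    using adj quot_dim_one_ssum_iff[OF Q P] unfolding adjacent_def by (auto simp: ssum_commute)
  note R = plus_line_Int_subspace[OF P Q p(1,2) q p(3)]
    and cover = distant_plus_line_Int[OF P Q p(1,2) q p(3)]
  have "plus_line (P \<inter> Q) (p + q) \<in> Gr sc" by (rule Gr_if_complements_distant[OF PG QG R cover])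
  then show ?thesis
    using plus_line_Int_neq[OF P Q p(1,2) q p(3)] cover Gr_subspace
    unfolding distant_cover_def by blast
qed

lemma distant_cover_imp_adjacent:
  assumes "R \<in> Gr sc" "subspace sc P" "subspace sc Q" "distant_cover R P Q" "R \<noteq> P" "R \<noteq> Q"
  shows "adjacent sc P Q"
  unfolding adjacent_def
  using distant_cover_quot_dim_one[OF assms]
    distant_cover_quot_dim_one[OF assms(1,3,2) distant_cover_commute[OF assms(4)] assms(6,5)]
  by (simp add: ssum_commute)

end

theorem theorem3p1:
  fixes sc :: "'k::division_ring \<Rightarrow> 'v::ab_group_add \<Rightarrow> 'v"
    and P Q :: "'v set"
  assumes "left_vs sc"
    and "Gr sc \<noteq> {}"
    and "P \<in> Gr sc" and "Q \<in> Gr sc"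
  shows "adjacent sc P Q \<longleftrightarrow>
         (\<exists>R\<in>Gr sc. R \<noteq> P \<and> R \<noteq> Q \<and>
            (\<forall>X\<in>Gr sc. distant X R \<longrightarrow> distant X P \<or> distant X Q))"
proof -
  interpret left_vector_space sc by unfold_locales (rule assms(1))
  have "subspace sc P" "subspace sc Q" using assms(3,4) by (simp_all add: Gr_subspace)
  then show ?thesis
    using adjacent_imp_distant_cover[OF assms(3,4)] distant_cover_imp_adjacent
    unfolding distant_cover_def by blast
qed

end
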